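(* Let $\mathcal{X}=\mathcal{X}^{(1)}\times\cdots\times\mathcal{X}^{(d)}$ with each $\mathcal{X}^{(j)}$ finite, $\pi$ a positive probability mass on $\mathcal{X}$, $\emptyset\ne S\subseteq\{1,\dots,d\}$, and $P$ a lazy, ergodic, $\pi$-reversible transition matrix on $\mathcal{X}$. Then $\gamma(P)\le\gamma(P^{(S)}\otimes P^{(-S)})$; in particular $t_{rel}(P)\ge t_{rel}(P^{(S)}\otimes P^{(-S)})$.
   Context: $P$ is lazy if $P(x,x)\ge1/2$ for all $x$. For $S\subseteq\{1,\dots,d\}$: $\pi^{(S)}(x^{(S)})=\sum_{x^{(-S)}}\pi(x)$ and $P^{(S)}(x^{(S)},y^{(S)}):=\frac{\sum_{x^{(-S)},y^{(-S)}}\pi(x)P(x,y)}{\pi^{(S)}(x^{(S)})}$; $P^{(-S)}:=P^{(\{1,\dots,d\}\setminus S)}$. $(P^{(S)}\otimes P^{(-S)})(x,y)=P^{(S)}(x^{(S)},y^{(S)})P^{(-S)}(x^{(-S)},y^{(-S)})$, with stationary distribution $\pi^{(S)}\otimes\pi^{(-S)}$. The right spectral gap of a chain $Q$ with stationary $\mu$ is $\gamma(Q)=\inf_{\mathrm{Var}_\mu f\ne0}\frac{\frac12\sum_{x,y}\mu(x)Q(x,y)(f(x)-f(y))^2}{\mathrm{Var}_\mu(f)}$, and $t_{rel}(Q)=1/\gamma(Q)$. *)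

theory Defs
  imports "HOL-Analysis.Analysis"
begin

text \<open>A transition matrix is a function Q :: 'x => 'x => real; only its values on
  \<Omega> x \<Omega> matter.\<close>

definition stochastic_on :: "'x set \<Rightarrow> ('x \<Rightarrow> 'x \<Rightarrow> real) \<Rightarrow> bool" where
  "stochastic_on \<Omega> Q \<longleftrightarrow> (\<forall>x\<in>\<Omega>. \<forall>y\<in>\<Omega>. Q x y \<ge> 0) \<and> (\<forall>x\<in>\<Omega>. (\<Sum>y\<in>\<Omega>. Q x y) = 1)"

definition prob_mass_pos :: "'x set \<Rightarrow> ('x \<Rightarrow> real) \<Rightarrow> bool" where
  "prob_mass_pos \<Omega> \<mu> \<longleftrightarrow> (\<forall>x\<in>\<Omega>. \<mu> x > 0) \<and> (\<Sum>x\<in>\<Omega>. \<mu> x) = 1"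

definition lazy_on :: "'x set \<Rightarrow> ('x \<Rightarrow> 'x \<Rightarrow> real) \<Rightarrow> bool" where
  "lazy_on \<Omega> Q \<longleftrightarrow> (\<forall>x\<in>\<Omega>. Q x x \<ge> 1/2)"

definition reversible_on :: "'x set \<Rightarrow> ('x \<Rightarrow> real) \<Rightarrow> ('x \<Rightarrow> 'x \<Rightarrow> real) \<Rightarrow> bool" where
  "reversible_on \<Omega> \<mu> Q \<longleftrightarrow> (\<forall>x\<in>\<Omega>. \<forall>y\<in>\<Omega>. \<mu> x * Q x y = \<mu> y * Q y x)"

fun mpow :: "'x set \<Rightarrow> ('x \<Rightarrow> 'x \<Rightarrow> real) \<Rightarrow> nat \<Rightarrow> 'x \<Rightarrow> 'x \<Rightarrow> real" where
  "mpow \<Omega> Q 0 x y = (if x = y then 1 else 0)"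
| "mpow \<Omega> Q (Suc n) x y = (\<Sum>z\<in>\<Omega>. mpow \<Omega> Q n x z * Q z y)"

definition irreducible_on :: "'x set \<Rightarrow> ('x \<Rightarrow> 'x \<Rightarrow> real) \<Rightarrow> bool" where
  "irreducible_on \<Omega> Q \<longleftrightarrow> (\<forall>x\<in>\<Omega>. \<forall>y\<in>\<Omega>. \<exists>n. mpow \<Omega> Q n x y > 0)"

definition aperiodic_on :: "'x set \<Rightarrow> ('x \<Rightarrow> 'x \<Rightarrow> real) \<Rightarrow> bool" where
  "aperiodic_on \<Omega> Q \<longleftrightarrow> (\<forall>x\<in>\<Omega>. Gcd {n. n \<ge> 1 \<and> mpow \<Omega> Q n x x > 0} = 1)"

definition ergodic_on :: "'x set \<Rightarrow> ('x \<Rightarrow> 'x \<Rightarrow> real) \<Rightarrow> bool" where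
  "ergodic_on \<Omega> Q \<longleftrightarrow> irreducible_on \<Omega> Q \<and> aperiodic_on \<Omega> Q"

definition expect :: "'x set \<Rightarrow> ('x \<Rightarrow> real) \<Rightarrow> ('x \<Rightarrow> real) \<Rightarrow> real" where
  "expect \<Omega> \<mu> f = (\<Sum>x\<in>\<Omega>. \<mu> x * f x)"

definition var :: "'x set \<Rightarrow> ('x \<Rightarrow> real) \<Rightarrow> ('x \<Rightarrow> real) \<Rightarrow> real" where
  "var \<Omega> \<mu> f = (\<Sum>x\<in>\<Omega>. \<mu> x * (f x - expect \<Omega> \<mu> f)^2)"

definition dirichlet :: "'x set \<Rightarrow> ('x \<Rightarrow> real) \<Rightarrow> ('x \<Rightarrow> 'x \<Rightarrow> real) \<Rightarrow> ('x \<Rightarrow> real) \<Rightarrow> real" where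
  "dirichlet \<Omega> \<mu> Q f = (1/2) * (\<Sum>x\<in>\<Omega>. \<Sum>y\<in>\<Omega>. \<mu> x * Q x y * (f x - f y)^2)"

definition spectral_gap :: "'x set \<Rightarrow> ('x \<Rightarrow> real) \<Rightarrow> ('x \<Rightarrow> 'x \<Rightarrow> real) \<Rightarrow> real" where
  "spectral_gap \<Omega> \<mu> Q = Inf {dirichlet \<Omega> \<mu> Q f / var \<Omega> \<mu> f | f. var \<Omega> \<mu> f \<noteq> 0}"

definition t_rel :: "'x set \<Rightarrow> ('x \<Rightarrow> real) \<Rightarrow> ('x \<Rightarrow> 'x \<Rightarrow> real) \<Rightarrow> real" where
  "t_rel \<Omega> \<mu> Q = 1 / spectral_gap \<Omega> \<mu> Q"

text \<open>States of X = X(1) x ... x X(d) are functions on {1..d} (extensional, PiE).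
  The projection x^(S) is restrict x S.\<close>

definition prod_space :: "nat \<Rightarrow> (nat \<Rightarrow> 'a set) \<Rightarrow> (nat \<Rightarrow> 'a) set" where
  "prod_space d X = PiE {1..d} X"

definition marg :: "(nat \<Rightarrow> 'a) set \<Rightarrow> ((nat \<Rightarrow> 'a) \<Rightarrow> real) \<Rightarrow> nat set \<Rightarrow> (nat \<Rightarrow> 'a) \<Rightarrow> real" where
  "marg \<Omega> \<pi> S xs = (\<Sum>x\<in>{x\<in>\<Omega>. restrict x S = xs}. \<pi> x)"

definition proj_chain :: "(nat \<Rightarrow> 'a) set \<Rightarrow> ((nat \<Rightarrow> 'a) \<Rightarrow> real) \<Rightarrow> ((nat \<Rightarrow> 'a) \<Rightarrow> (nat \<Rightarrow> 'a) \<Rightarrow> real)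
    \<Rightarrow> nat set \<Rightarrow> (nat \<Rightarrow> 'a) \<Rightarrow> (nat \<Rightarrow> 'a) \<Rightarrow> real" where
  "proj_chain \<Omega> \<pi> P S xs ys =
     (\<Sum>x\<in>{x\<in>\<Omega>. restrict x S = xs}. \<Sum>y\<in>{y\<in>\<Omega>. restrict y S = ys}. \<pi> x * P x y) / marg \<Omega> \<pi> S xs"

definition tensor_chain :: "nat \<Rightarrow> (nat \<Rightarrow> 'a set) \<Rightarrow> ((nat \<Rightarrow> 'a) \<Rightarrow> real) \<Rightarrow> ((nat \<Rightarrow> 'a) \<Rightarrow> (nat \<Rightarrow> 'a) \<Rightarrow> real)
    \<Rightarrow> nat set \<Rightarrow> (nat \<Rightarrow> 'a) \<Rightarrow> (nat \<Rightarrow> 'a) \<Rightarrow> real" where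
  "tensor_chain d X \<pi> P S x y =
     proj_chain (prod_space d X) \<pi> P S (restrict x S) (restrict y S) *
     proj_chain (prod_space d X) \<pi> P ({1..d} - S) (restrict x ({1..d} - S)) (restrict y ({1..d} - S))"

definition tensor_marg :: "nat \<Rightarrow> (nat \<Rightarrow> 'a set) \<Rightarrow> ((nat \<Rightarrow> 'a) \<Rightarrow> real) \<Rightarrow> nat set \<Rightarrow> (nat \<Rightarrow> 'a) \<Rightarrow> real" where
  "tensor_marg d X \<pi> S x =
     marg (prod_space d X) \<pi> S (restrict x S) * marg (prod_space d X) \<pi> ({1..d} - S) (restrict x ({1..d} - S))"

end

theory Submission
  imports Defs
begin

text \<open>Restricting functions to the coordinates in \<open>R\<close> turns the Dirichlet form and the
  variance of the projected chain \<open>P^(R)\<close> into those of \<open>P\<close>, so both projections inherit the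
  Poincare inequality \<open>\<E>(h) \<ge> \<gamma> Var(h)\<close> for \<open>\<gamma> = \<gamma>(P)\<close>, and they stay lazy and reversible.
  The Poincare inequality tensorizes: writing each form as a quadratic form \<open>h\<^sup>T K h\<close>, the
  kernel of \<open>\<E> - c Var\<close> of a product of two reversible chains, the second one lazy, is a sum of
  three tensor products of positive semidefinite kernels; laziness enters through diagonal
  dominance of the flow matrix \<open>\<nu>(v) B(v,w)\<close>.  Irreducibility makes \<open>\<gamma>(P)\<close> positive (a path argument), which yields
  the inequality for relaxation times.\<close>

section \<open>Quadratic forms of kernels\<close>

definition qform :: "'u set \<Rightarrow> ('u \<Rightarrow> 'u \<Rightarrow> real) \<Rightarrow> ('u \<Rightarrow> real) \<Rightarrow> ('u \<Rightarrow> real) \<Rightarrow> real" where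
  "qform U W g h = (\<Sum>u\<in>U. \<Sum>u'\<in>U. W u u' * g u * h u')"

definition psd_on :: "'u set \<Rightarrow> ('u \<Rightarrow> 'u \<Rightarrow> real) \<Rightarrow> bool" where
  "psd_on U W \<longleftrightarrow> (\<forall>g. 0 \<le> qform U W g g)"

definition diag_kernel :: "('u \<Rightarrow> real) \<Rightarrow> 'u \<Rightarrow> 'u \<Rightarrow> real" where
  "diag_kernel \<mu> u u' = (if u = u' then \<mu> u else 0)"

definition kernel_tensor ::
    "('u \<Rightarrow> 'u \<Rightarrow> real) \<Rightarrow> ('v \<Rightarrow> 'v \<Rightarrow> real) \<Rightarrow> 'u \<times> 'v \<Rightarrow> 'u \<times> 'v \<Rightarrow> real" where
  "kernel_tensor W1 W2 p q = W1 (fst p) (fst q) * W2 (snd p) (snd q)"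

lemma qform_add: "qform U (\<lambda>u u'. W u u' + W' u u') g h = qform U W g h + qform U W' g h"
  unfolding qform_def by (simp add: sum.distrib distrib_right)

lemma qform_diff: "qform U (\<lambda>u u'. W u u' - W' u u') g h = qform U W g h - qform U W' g h"
  unfolding qform_def by (simp add: sum_subtractf left_diff_distrib)

lemma qform_scale: "qform U (\<lambda>u u'. c * W u u') g h = c * qform U W g h"
  unfolding qform_def by (simp add: sum_distrib_left mult.assoc)

lemma qform_commute:
  "(\<And>u u'. u \<in> U \<Longrightarrow> u' \<in> U \<Longrightarrow> W u u' = W u' u) \<Longrightarrow> qform U W h g = qform U W g h"
  unfolding qform_def by (subst sum.swap) (simp add: mult_ac)

lemma qform_add_arg:
  "qform U W (\<lambda>u. g u + h u) (\<lambda>u. g u + h u)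
     = qform U W g g + qform U W g h + qform U W h g + qform U W h h"
  unfolding qform_def by (simp add: sum.distrib algebra_simps)

lemma qform_diag_kernel: "finite U \<Longrightarrow> qform U (diag_kernel \<mu>) g h = (\<Sum>u\<in>U. \<mu> u * g u * h u)"
  unfolding qform_def diag_kernel_def by (simp add: if_distrib if_distribR sum.delta cong: if_cong)

lemma qform_outer: "qform U (\<lambda>u u'. \<mu> u * \<mu> u') g h = (\<Sum>u\<in>U. \<mu> u * g u) * (\<Sum>u\<in>U. \<mu> u * h u)"
  unfolding qform_def sum_product by (simp add: mult_ac)

lemma psd_on_add: "psd_on U W \<Longrightarrow> psd_on U W' \<Longrightarrow> psd_on U (\<lambda>u u'. W u u' + W' u u')"
  unfolding psd_on_def qform_add by (simp add: add_nonneg_nonneg)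

lemma psd_on_scale: "0 \<le> c \<Longrightarrow> psd_on U W \<Longrightarrow> psd_on U (\<lambda>u u'. c * W u u')"
  unfolding psd_on_def qform_scale by simp

lemma qform_kernel_tensor:
  assumes "finite U" "finite V"
  shows "qform (U \<times> V) (kernel_tensor W1 W2) f g
       = (\<Sum>v\<in>V. \<Sum>v'\<in>V. W2 v v' * qform U W1 (\<lambda>u. f (u, v)) (\<lambda>u. g (u, v')))"
proof -
  have "qform (U \<times> V) (kernel_tensor W1 W2) f g
      = (\<Sum>u\<in>U. \<Sum>v\<in>V. \<Sum>u'\<in>U. \<Sum>v'\<in>V. W1 u u' * W2 v v' * f (u, v) * g (u', v'))"
    unfolding qform_def kernel_tensor_def by (simp add: sum.cartesian_product')
  also have "\<dots> = (\<Sum>v\<in>V. \<Sum>v'\<in>V. \<Sum>u\<in>U. \<Sum>u'\<in>U. W1 u u' * W2 v v' * f (u, v) * g (u', v'))"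
    by (subst sum.swap) (intro sum.cong refl, subst sum.swap, intro sum.cong refl sum.swap)
  also have "\<dots> = (\<Sum>v\<in>V. \<Sum>v'\<in>V. W2 v v' * qform U W1 (\<lambda>u. f (u, v)) (\<lambda>u. g (u, v')))"
    unfolding qform_def sum_distrib_left by (intro sum.cong refl) (simp add: mult_ac)
  finally show ?thesis .
qed

lemma qform_kernel_tensor':
  assumes "finite U" "finite V"
  shows "qform (U \<times> V) (kernel_tensor W1 W2) f g
       = (\<Sum>u\<in>U. \<Sum>u'\<in>U. W1 u u' * qform V W2 (\<lambda>v. f (u, v)) (\<lambda>v. g (u', v)))"
proof -
  have "qform (U \<times> V) (kernel_tensor W1 W2) f g
      = (\<Sum>u\<in>U. \<Sum>v\<in>V. \<Sum>u'\<in>U. \<Sum>v'\<in>V. W1 u u' * W2 v v' * f (u, v) * g (u', v'))"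
    unfolding qform_def kernel_tensor_def by (simp add: sum.cartesian_product')
  also have "\<dots> = (\<Sum>u\<in>U. \<Sum>u'\<in>U. \<Sum>v\<in>V. \<Sum>v'\<in>V. W1 u u' * W2 v v' * f (u, v) * g (u', v'))"
    by (intro sum.cong refl sum.swap)
  also have "\<dots> = (\<Sum>u\<in>U. \<Sum>u'\<in>U. W1 u u' * qform V W2 (\<lambda>v. f (u, v)) (\<lambda>v. g (u', v)))"
    unfolding qform_def sum_distrib_left by (intro sum.cong refl) (simp add: mult_ac)
  finally show ?thesis .
qed

lemma psd_on_kernel_tensor_diag:
  assumes "finite U" "finite V" "\<And>u. u \<in> U \<Longrightarrow> 0 \<le> \<mu> u" "psd_on V W"
  shows "psd_on (U \<times> V) (kernel_tensor (diag_kernel \<mu>) W)"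
  unfolding psd_on_def
proof
  fix f :: "_ \<Rightarrow> real"
  have "qform (U \<times> V) (kernel_tensor (diag_kernel \<mu>) W) f f
      = (\<Sum>u\<in>U. \<mu> u * qform V W (\<lambda>v. f (u, v)) (\<lambda>v. f (u, v)))"
    unfolding qform_kernel_tensor'[OF assms(1,2)] diag_kernel_def
    using assms(1) by (simp add: if_distrib if_distribR sum.delta cong: if_cong)
  also have "\<dots> \<ge> 0"
    using assms(3,4) unfolding psd_on_def by (simp add: sum_nonneg)
  finally show "0 \<le> qform (U \<times> V) (kernel_tensor (diag_kernel \<mu>) W) f f" .
qed

section \<open>Lazy reversible kernels\<close>

lemma sum_flow_row:
  fixes \<nu> G :: "'v \<Rightarrow> real"
  assumes "stochastic_on V B"
  shows "(\<Sum>v\<in>V. \<Sum>w\<in>V. \<nu> v * B v w * G v) = (\<Sum>v\<in>V. \<nu> v * G v)"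
proof (rule sum.cong[OF refl])
  fix v assume "v \<in> V"
  have "(\<Sum>w\<in>V. \<nu> v * B v w * G v) = \<nu> v * G v * (\<Sum>w\<in>V. B v w)"
    by (simp add: sum_distrib_left sum_distrib_right mult_ac)
  then show "(\<Sum>w\<in>V. \<nu> v * B v w * G v) = \<nu> v * G v"
    using assms \<open>v \<in> V\<close> unfolding stochastic_on_def by simp
qed

lemma sum_flow_column:
  fixes \<nu> G :: "'v \<Rightarrow> real"
  assumes "stochastic_on V B" "reversible_on V \<nu> B"
  shows "(\<Sum>v\<in>V. \<Sum>w\<in>V. \<nu> v * B v w * G w) = (\<Sum>v\<in>V. \<nu> v * G v)"
proof -
  have "(\<Sum>v\<in>V. \<Sum>w\<in>V. \<nu> v * B v w * G w) = (\<Sum>v\<in>V. \<Sum>w\<in>V. \<nu> w * B w v * G w)"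
    using assms(2) unfolding reversible_on_def by (intro sum.cong refl) simp
  also have "\<dots> = (\<Sum>w\<in>V. \<Sum>v\<in>V. \<nu> w * B w v * G w)"
    by (rule sum.swap)
  finally show ?thesis
    using sum_flow_row[OF assms(1)] by simp
qed

lemma lazy_reversible_sum_nonneg:
  assumes "finite V" "\<And>v. v \<in> V \<Longrightarrow> 0 \<le> \<nu> v"
    and "stochastic_on V B" "lazy_on V B" "reversible_on V \<nu> B"
    and "\<And>v. v \<in> V \<Longrightarrow> 0 \<le> L v v"
    and "\<And>v w. v \<in> V \<Longrightarrow> w \<in> V \<Longrightarrow> 0 \<le> 2 * L v w + L v v + L w w"
  shows "0 \<le> (\<Sum>v\<in>V. \<Sum>w\<in>V. \<nu> v * B v w * L v w)"
proof -
  have B_nonneg: "\<And>v w. v \<in> V \<Longrightarrow> w \<in> V \<Longrightarrow> 0 \<le> B v w"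
    and B_lazy: "\<And>v. v \<in> V \<Longrightarrow> 1/2 \<le> B v v"
    using assms(3,4) unfolding stochastic_on_def lazy_on_def by auto
  \<comment> \<open>Off the diagonal, \<open>L v w \<ge> -(L v v + L w w)/2\<close>; the laziness \<open>B v v \<ge> 1/2\<close> makes the
    diagonal terms pay for these negative parts.\<close>
  define R where "R v w = (if v = w then 2 * (\<nu> v * B v v * L v v) else 0)
                          - \<nu> v * B v w * (L v v + L w w) / 2" for v w
  have R_le: "R v w \<le> \<nu> v * B v w * L v w" if "v \<in> V" "w \<in> V" for v w
  proof (cases "v = w")
    case False
    have "0 \<le> \<nu> v * B v w * (2 * L v w + L v v + L w w)"
      using assms(2,7) B_nonneg that by simp
    moreover have "\<nu> v * B v w * (2 * L v w + L v v + L w w)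
        = 2 * (\<nu> v * B v w * L v w) + \<nu> v * B v w * (L v v + L w w)"
      by (simp add: algebra_simps)
    ultimately show ?thesis
      using False unfolding R_def by simp
  qed (simp add: R_def)
  have row_L: "(\<Sum>v\<in>V. \<Sum>w\<in>V. \<nu> v * B v w * L v v) = (\<Sum>v\<in>V. \<nu> v * L v v)"
    by (rule sum_flow_row[OF assms(3)])
  have column_L: "(\<Sum>v\<in>V. \<Sum>w\<in>V. \<nu> v * B v w * L w w) = (\<Sum>v\<in>V. \<nu> v * L v v)"
    by (rule sum_flow_column[OF assms(3,5)])
  have "(\<Sum>v\<in>V. \<Sum>w\<in>V. R v w)
      = (\<Sum>v\<in>V. 2 * (\<nu> v * B v v * L v v))
        - ((\<Sum>v\<in>V. \<Sum>w\<in>V. \<nu> v * B v w * L v v) + (\<Sum>v\<in>V. \<Sum>w\<in>V. \<nu> v * B v w * L w w)) / 2"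
    unfolding R_def using assms(1)
    by (simp add: sum_subtractf sum.distrib sum_divide_distrib[symmetric] algebra_simps)
  also have "\<dots> = (\<Sum>v\<in>V. \<nu> v * (2 * B v v - 1) * L v v)"
    unfolding row_L column_L by (simp add: sum_subtractf[symmetric] algebra_simps)
  also have "\<dots> \<ge> 0"
  proof (intro sum_nonneg mult_nonneg_nonneg)
    fix v assume "v \<in> V"
    then show "0 \<le> \<nu> v" "0 \<le> 2 * B v v - 1" "0 \<le> L v v"
      using assms(2,6) B_lazy[of v] by auto
  qed
  finally show ?thesis
    by (meson order_trans sum_mono R_le)
qed

lemma psd_on_lazy_flow_minus_outer:
  assumes "finite V" "prob_mass_pos V \<nu>"
    and "stochastic_on V B" "lazy_on V B" "reversible_on V \<nu> B"
  shows "psd_on V (\<lambda>v w. \<nu> v * B v w - \<nu> v * \<nu> w)"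
  unfolding psd_on_def
proof
  fix h :: "_ \<Rightarrow> real"
  have \<nu>_nonneg: "\<And>v. v \<in> V \<Longrightarrow> 0 \<le> \<nu> v" and \<nu>_sum: "sum \<nu> V = 1"
    using assms(2) unfolding prob_mass_pos_def by (auto intro: less_imp_le)
  define m where "m = (\<Sum>v\<in>V. \<nu> v * h v)"
  have "0 \<le> (\<Sum>v\<in>V. \<Sum>w\<in>V. \<nu> v * B v w * ((h v - m) * (h w - m)))"
  proof (rule lazy_reversible_sum_nonneg[OF assms(1) \<nu>_nonneg assms(3-5)])
    fix v w
    have "2 * ((h v - m) * (h w - m)) + (h v - m) * (h v - m) + (h w - m) * (h w - m)
        = ((h v - m) + (h w - m))\<^sup>2"
      by (simp add: power2_eq_square algebra_simps)
    then show "0 \<le> 2 * ((h v - m) * (h w - m)) + (h v - m) * (h v - m) + (h w - m) * (h w - m)"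
      by simp
  next
    fix v
    show "0 \<le> (h v - m) * (h v - m)"
      by (rule zero_le_square)
  qed
  also have "\<dots> = (\<Sum>v\<in>V. \<Sum>w\<in>V. \<nu> v * B v w * h v * h w)
      - m * (\<Sum>v\<in>V. \<Sum>w\<in>V. \<nu> v * B v w * h w) - m * (\<Sum>v\<in>V. \<Sum>w\<in>V. \<nu> v * B v w * h v)
      + m\<^sup>2 * (\<Sum>v\<in>V. \<Sum>w\<in>V. \<nu> v * B v w * 1)"
    by (simp add: sum_subtractf sum.distrib sum_distrib_left algebra_simps power2_eq_square)
  also have "\<dots> = qform V (\<lambda>v w. \<nu> v * B v w - \<nu> v * \<nu> w) h h"
  proof -
    have "(\<Sum>v\<in>V. \<Sum>w\<in>V. \<nu> v * B v w * h w) = m"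
      unfolding m_def by (rule sum_flow_column[OF assms(3,5)])
    moreover have "(\<Sum>v\<in>V. \<Sum>w\<in>V. \<nu> v * B v w * h v) = m"
      unfolding m_def by (rule sum_flow_row[OF assms(3)])
    moreover have "(\<Sum>v\<in>V. \<Sum>w\<in>V. \<nu> v * B v w * 1) = 1"
      using sum_flow_row[OF assms(3), where G = "\<lambda>_. 1"] \<nu>_sum by simp
    moreover have "qform V (\<lambda>v w. \<nu> v * \<nu> w) h h = m\<^sup>2"
      unfolding qform_outer m_def by (simp add: power2_eq_square)
    ultimately show ?thesis
      unfolding qform_diff by (simp add: qform_def power2_eq_square)
  qed
  finally show "0 \<le> qform V (\<lambda>v w. \<nu> v * B v w - \<nu> v * \<nu> w) h h" .
qed

lemma psd_on_kernel_tensor_lazy_flow: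
  fixes W :: "'u \<Rightarrow> 'u \<Rightarrow> real" and B :: "'v \<Rightarrow> 'v \<Rightarrow> real"
  assumes "finite U" "finite V" "psd_on U W" "\<And>u u'. u \<in> U \<Longrightarrow> u' \<in> U \<Longrightarrow> W u u' = W u' u"
    and "\<And>v. v \<in> V \<Longrightarrow> 0 \<le> \<nu> v" "stochastic_on V B" "lazy_on V B" "reversible_on V \<nu> B"
  shows "psd_on (U \<times> V) (kernel_tensor W (\<lambda>v w. \<nu> v * B v w))"
  unfolding psd_on_def
proof
  fix f :: "'u \<times> 'v \<Rightarrow> real"
  have W_psd: "0 \<le> qform U W g g" for g
    using assms(3) unfolding psd_on_def by blast
  define L where "L v w = qform U W (\<lambda>u. f (u, v)) (\<lambda>u. f (u, w))" for v w
  have "0 \<le> (\<Sum>v\<in>V. \<Sum>w\<in>V. \<nu> v * B v w * L v w)"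
  proof (rule lazy_reversible_sum_nonneg[OF assms(2,5-8)])
    fix v w
    have "2 * L v w + L v v + L w w = qform U W (\<lambda>u. f (u, v) + f (u, w)) (\<lambda>u. f (u, v) + f (u, w))"
      using qform_commute[of U W, OF assms(4)] unfolding L_def qform_add_arg by simp
    then show "0 \<le> 2 * L v w + L v v + L w w"
      using W_psd by simp
  next
    fix v
    show "0 \<le> L v v"
      unfolding L_def by (rule W_psd)
  qed
  then show "0 \<le> qform (U \<times> V) (kernel_tensor W (\<lambda>v w. \<nu> v * B v w)) f f"
    unfolding qform_kernel_tensor[OF assms(1,2)] L_def .
qed

lemma qform_centered:
  assumes "finite U" "sum \<mu> U = 1"
  shows "qform U (\<lambda>u u'. diag_kernel \<mu> u u' - \<mu> u * \<mu> u') g h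
       = qform U (diag_kernel \<mu>) (\<lambda>u. g u - (\<Sum>u\<in>U. \<mu> u * g u)) (\<lambda>u. h u - (\<Sum>u\<in>U. \<mu> u * h u))"
proof -
  define a b where "a = (\<Sum>u\<in>U. \<mu> u * g u)" and "b = (\<Sum>u\<in>U. \<mu> u * h u)"
  have "\<mu> u * (g u - a) * (h u - b) = \<mu> u * g u * h u - b * (\<mu> u * g u) - a * (\<mu> u * h u) + a * b * \<mu> u"
    for u by (simp add: algebra_simps)
  then have "(\<Sum>u\<in>U. \<mu> u * (g u - a) * (h u - b))
      = (\<Sum>u\<in>U. \<mu> u * g u * h u) - b * a - a * b + a * b * sum \<mu> U"
    by (simp add: sum_subtractf sum.distrib sum_distrib_left[symmetric] a_def[symmetric] b_def[symmetric])
  then show ?thesis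
    unfolding qform_diff qform_outer qform_diag_kernel[OF assms(1)] a_def[symmetric] b_def[symmetric]
    using assms(2) by simp
qed

lemma psd_on_kernel_tensor_centered:
  fixes \<mu> :: "'u \<Rightarrow> real" and W :: "'v \<Rightarrow> 'v \<Rightarrow> real"
  assumes "finite U" "finite V" "\<And>u. u \<in> U \<Longrightarrow> 0 \<le> \<mu> u" "sum \<mu> U = 1" "psd_on V W"
  shows "psd_on (U \<times> V) (kernel_tensor (\<lambda>u u'. diag_kernel \<mu> u u' - \<mu> u * \<mu> u') W)"
  unfolding psd_on_def
proof
  fix f :: "'u \<times> 'v \<Rightarrow> real"
  define g where "g p = f p - (\<Sum>u\<in>U. \<mu> u * f (u, snd p))" for p
  have "qform (U \<times> V) (kernel_tensor (\<lambda>u u'. diag_kernel \<mu> u u' - \<mu> u * \<mu> u') W) f f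
      = qform (U \<times> V) (kernel_tensor (diag_kernel \<mu>) W) g g"
    unfolding qform_kernel_tensor[OF assms(1,2)] qform_centered[OF assms(1,4)] g_def by simp
  also have "\<dots> \<ge> 0"
    using psd_on_kernel_tensor_diag[OF assms(1,2,3,5)] unfolding psd_on_def by simp
  finally show "0 \<le> qform (U \<times> V) (kernel_tensor (\<lambda>u u'. diag_kernel \<mu> u u' - \<mu> u * \<mu> u') W) f f" .
qed

section \<open>Tensorization of the Poincare inequality\<close>

lemma dirichlet_eq_qform:
  fixes \<mu> h :: "'u \<Rightarrow> real"
  assumes "finite U" "stochastic_on U A" "reversible_on U \<mu> A"
  shows "dirichlet U \<mu> A h = qform U (\<lambda>u u'. diag_kernel \<mu> u u' - \<mu> u * A u u') h h"
proof -
  have "\<mu> u * A u u' * (h u - h u')\<^sup>2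
      = \<mu> u * A u u' * (h u)\<^sup>2 + \<mu> u * A u u' * (h u')\<^sup>2 - 2 * (\<mu> u * A u u' * h u * h u')" for u u'
    by (simp add: power2_diff algebra_simps)
  then have "(\<Sum>u\<in>U. \<Sum>u'\<in>U. \<mu> u * A u u' * (h u - h u')\<^sup>2)
      = (\<Sum>u\<in>U. \<Sum>u'\<in>U. \<mu> u * A u u' * (h u)\<^sup>2) + (\<Sum>u\<in>U. \<Sum>u'\<in>U. \<mu> u * A u u' * (h u')\<^sup>2)
        - 2 * qform U (\<lambda>u u'. \<mu> u * A u u') h h"
    unfolding qform_def by (simp only: sum.distrib sum_subtractf sum_distrib_left)
  also have "\<dots> = 2 * qform U (diag_kernel \<mu>) h h - 2 * qform U (\<lambda>u u'. \<mu> u * A u u') h h"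
    unfolding sum_flow_row[OF assms(2)] sum_flow_column[OF assms(2,3)] qform_diag_kernel[OF assms(1)]
    by (simp add: power2_eq_square mult.assoc)
  finally show ?thesis
    unfolding dirichlet_def qform_diff by simp
qed

lemma var_eq_qform:
  assumes "finite U" "sum \<mu> U = 1"
  shows "var U \<mu> h = qform U (\<lambda>u u'. diag_kernel \<mu> u u' - \<mu> u * \<mu> u') h h"
  unfolding qform_centered[OF assms] qform_diag_kernel[OF assms(1)] var_def expect_def
  by (simp add: power2_eq_square mult.assoc)

definition poincare_on :: "'x set \<Rightarrow> ('x \<Rightarrow> real) \<Rightarrow> ('x \<Rightarrow> 'x \<Rightarrow> real) \<Rightarrow> real \<Rightarrow> bool" where
  "poincare_on \<Omega> \<mu> Q c \<longleftrightarrow> (\<forall>f. c * var \<Omega> \<mu> f \<le> dirichlet \<Omega> \<mu> Q f)"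

definition poincare_kernel :: "('u \<Rightarrow> real) \<Rightarrow> ('u \<Rightarrow> 'u \<Rightarrow> real) \<Rightarrow> real \<Rightarrow> 'u \<Rightarrow> 'u \<Rightarrow> real" where
  "poincare_kernel \<mu> A c u u' = (1 - c) * diag_kernel \<mu> u u' - \<mu> u * A u u' + c * (\<mu> u * \<mu> u')"

lemma qform_poincare_kernel:
  assumes "finite U" "prob_mass_pos U \<mu>" "stochastic_on U A" "reversible_on U \<mu> A"
  shows "qform U (poincare_kernel \<mu> A c) h h = dirichlet U \<mu> A h - c * var U \<mu> h"
proof -
  have "sum \<mu> U = 1"
    using assms(2) unfolding prob_mass_pos_def by simp
  then show ?thesis
    unfolding poincare_kernel_def[abs_def] dirichlet_eq_qform[OF assms(1,3,4)]
      var_eq_qform[OF assms(1) \<open>sum \<mu> U = 1\<close>] qform_add qform_diff qform_scale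
    by (simp add: algebra_simps)
qed

lemma poincare_on_iff_psd_on:
  assumes "finite U" "prob_mass_pos U \<mu>" "stochastic_on U A" "reversible_on U \<mu> A"
  shows "poincare_on U \<mu> A c \<longleftrightarrow> psd_on U (poincare_kernel \<mu> A c)"
  unfolding poincare_on_def psd_on_def qform_poincare_kernel[OF assms] by simp

lemma poincare_kernel_commute:
  "reversible_on U \<mu> A \<Longrightarrow> u \<in> U \<Longrightarrow> u' \<in> U \<Longrightarrow> poincare_kernel \<mu> A c u u' = poincare_kernel \<mu> A c u' u"
  unfolding poincare_kernel_def reversible_on_def diag_kernel_def by (simp add: mult.commute)

lemma stochastic_on_kernel_tensor:
  assumes "stochastic_on U A" "stochastic_on V B"
  shows "stochastic_on (U \<times> V) (kernel_tensor A B)"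
  using assms unfolding stochastic_on_def kernel_tensor_def
  by (auto simp: sum.cartesian_product' sum_product[symmetric])

lemma reversible_on_kernel_tensor:
  assumes "reversible_on U \<mu> A" "reversible_on V \<nu> B"
  shows "reversible_on (U \<times> V) (\<lambda>p. \<mu> (fst p) * \<nu> (snd p)) (kernel_tensor A B)"
  unfolding reversible_on_def kernel_tensor_def
proof (intro ballI)
  fix p q assume "p \<in> U \<times> V" "q \<in> U \<times> V"
  then have "\<mu> (fst p) * A (fst p) (fst q) * (\<nu> (snd p) * B (snd p) (snd q))
           = \<mu> (fst q) * A (fst q) (fst p) * (\<nu> (snd q) * B (snd q) (snd p))"
    using assms unfolding reversible_on_def by (metis mem_Times_iff)
  then show "\<mu> (fst p) * \<nu> (snd p) * (A (fst p) (fst q) * B (snd p) (snd q))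
           = \<mu> (fst q) * \<nu> (snd q) * (A (fst q) (fst p) * B (snd q) (snd p))"
    by (simp add: mult_ac)
qed

lemma prob_mass_pos_product:
  assumes "prob_mass_pos U \<mu>" "prob_mass_pos V \<nu>"
  shows "prob_mass_pos (U \<times> V) (\<lambda>p. \<mu> (fst p) * \<nu> (snd p))"
  using assms unfolding prob_mass_pos_def
  by (auto simp: sum.cartesian_product' sum_product[symmetric])

lemma poincare_kernel_product:
  "poincare_kernel (\<lambda>p. \<mu> (fst p) * \<nu> (snd p)) (kernel_tensor A B) c p q
     = kernel_tensor (poincare_kernel \<mu> A c) (\<lambda>v v'. \<nu> v * B v v') p q
       + kernel_tensor (diag_kernel \<mu>) (poincare_kernel \<nu> B c) p q
       + c * kernel_tensor (\<lambda>u u'. diag_kernel \<mu> u u' - \<mu> u * \<mu> u') (\<lambda>v v'. \<nu> v * B v v' - \<nu> v * \<nu> v') p q"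
proof -
  have "diag_kernel (\<lambda>p. \<mu> (fst p) * \<nu> (snd p)) p q
      = diag_kernel \<mu> (fst p) (fst q) * diag_kernel \<nu> (snd p) (snd q)"
    by (auto simp: diag_kernel_def prod_eq_iff)
  then show ?thesis
    unfolding poincare_kernel_def kernel_tensor_def by (simp add: algebra_simps)
qed

theorem poincare_on_kernel_tensor:
  fixes \<mu> :: "'u \<Rightarrow> real" and \<nu> :: "'v \<Rightarrow> real"
  assumes U: "finite U" "prob_mass_pos U \<mu>" "stochastic_on U A" "reversible_on U \<mu> A"
    and V: "finite V" "prob_mass_pos V \<nu>" "stochastic_on V B" "lazy_on V B" "reversible_on V \<nu> B"
    and "0 \<le> c" "poincare_on U \<mu> A c" "poincare_on V \<nu> B c"
  shows "poincare_on (U \<times> V) (\<lambda>p. \<mu> (fst p) * \<nu> (snd p)) (kernel_tensor A B) c"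
proof -
  have \<mu>_nonneg: "\<And>u. u \<in> U \<Longrightarrow> 0 \<le> \<mu> u" and \<mu>_sum: "sum \<mu> U = 1"
    using U(2) unfolding prob_mass_pos_def by (auto intro: less_imp_le)
  have \<nu>_nonneg: "\<And>v. v \<in> V \<Longrightarrow> 0 \<le> \<nu> v"
    using V(2) unfolding prob_mass_pos_def by (auto intro: less_imp_le)
  have "psd_on U (poincare_kernel \<mu> A c)" "psd_on V (poincare_kernel \<nu> B c)"
    using assms(11,12) poincare_on_iff_psd_on[OF U] poincare_on_iff_psd_on[OF V(1,2,3,5)] by auto
  then have "psd_on (U \<times> V) (\<lambda>p q. kernel_tensor (poincare_kernel \<mu> A c) (\<lambda>v v'. \<nu> v * B v v') p q
       + kernel_tensor (diag_kernel \<mu>) (poincare_kernel \<nu> B c) p q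
       + c * kernel_tensor (\<lambda>u u'. diag_kernel \<mu> u u' - \<mu> u * \<mu> u') (\<lambda>v v'. \<nu> v * B v v' - \<nu> v * \<nu> v') p q)"
    using psd_on_lazy_flow_minus_outer[OF V(1,2,3,4,5)] poincare_kernel_commute[OF U(4)]
    by (intro psd_on_add psd_on_scale psd_on_kernel_tensor_lazy_flow psd_on_kernel_tensor_diag
        psd_on_kernel_tensor_centered U(1) V(1,3-5) \<mu>_nonneg \<nu>_nonneg \<mu>_sum \<open>0 \<le> c\<close>)
  then have "psd_on (U \<times> V) (poincare_kernel (\<lambda>p. \<mu> (fst p) * \<nu> (snd p)) (kernel_tensor A B) c)"
    unfolding psd_on_def poincare_kernel_product[abs_def] .
  then show ?thesis
    using U(1) V(1) by (subst poincare_on_iff_psd_on) (auto intro: prob_mass_pos_product stochastic_on_kernel_tensor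
        reversible_on_kernel_tensor U V)
qed

section \<open>Spectral gap and irreducibility\<close>

lemma dirichlet_nonneg:
  assumes "\<And>x. x \<in> \<Omega> \<Longrightarrow> 0 \<le> \<mu> x" "stochastic_on \<Omega> Q"
  shows "0 \<le> dirichlet \<Omega> \<mu> Q f"
  using assms unfolding dirichlet_def stochastic_on_def by (auto intro!: sum_nonneg)

lemma var_nonneg: "(\<And>x. x \<in> \<Omega> \<Longrightarrow> 0 \<le> \<mu> x) \<Longrightarrow> 0 \<le> var \<Omega> \<mu> f"
  unfolding var_def by (auto intro!: sum_nonneg)

lemma var_eq_0_iff:
  assumes "finite \<Omega>" "prob_mass_pos \<Omega> \<mu>"
  shows "var \<Omega> \<mu> f = 0 \<longleftrightarrow> (\<forall>x\<in>\<Omega>. \<forall>y\<in>\<Omega>. f x = f y)"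
proof
  have \<mu>_pos: "\<And>x. x \<in> \<Omega> \<Longrightarrow> 0 < \<mu> x" and \<mu>_sum: "sum \<mu> \<Omega> = 1"
    using assms(2) unfolding prob_mass_pos_def by auto
  {
    assume "var \<Omega> \<mu> f = 0"
    moreover have "0 \<le> \<mu> x * (f x - expect \<Omega> \<mu> f)\<^sup>2" if "x \<in> \<Omega>" for x
      using \<mu>_pos[OF that] by simp
    ultimately have zero: "\<mu> x * (f x - expect \<Omega> \<mu> f)\<^sup>2 = 0" if "x \<in> \<Omega>" for x
      using assms(1) that unfolding var_def by (simp add: sum_nonneg_eq_0_iff)
    have "f x = expect \<Omega> \<mu> f" if "x \<in> \<Omega>" for x
    proof -
      have "\<mu> x \<noteq> 0"
        using \<mu>_pos[OF that] by simp
      then show ?thesis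
        using zero[OF that] by simp
    qed
    then show "\<forall>x\<in>\<Omega>. \<forall>y\<in>\<Omega>. f x = f y"
      by simp
  }
  assume const: "\<forall>x\<in>\<Omega>. \<forall>y\<in>\<Omega>. f x = f y"
  have "\<Omega> \<noteq> {}"
    using \<mu>_sum by auto
  then obtain x0 where "x0 \<in> \<Omega>"
    by blast
  then have f_x0: "f x = f x0" if "x \<in> \<Omega>" for x
    using const that by blast
  then have "expect \<Omega> \<mu> f = f x0"
    using \<mu>_sum unfolding expect_def by (simp add: sum_distrib_right[symmetric])
  then show "var \<Omega> \<mu> f = 0"
    using f_x0 unfolding var_def by simp
qed

lemma var_le_second_moment:
  assumes "finite \<Omega>" "sum \<mu> \<Omega> = 1"
  shows "var \<Omega> \<mu> f \<le> (\<Sum>x\<in>\<Omega>. \<mu> x * (f x - c)\<^sup>2)"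
proof -
  define m where "m = (\<Sum>x\<in>\<Omega>. \<mu> x * f x)"
  have "var \<Omega> \<mu> f = (\<Sum>x\<in>\<Omega>. \<mu> x * (f x)\<^sup>2) - m\<^sup>2"
    unfolding var_eq_qform[OF assms] qform_diff qform_outer qform_diag_kernel[OF assms(1)] m_def
    by (simp add: power2_eq_square mult.assoc)
  moreover have "(\<Sum>x\<in>\<Omega>. \<mu> x * (f x - c)\<^sup>2) = (\<Sum>x\<in>\<Omega>. \<mu> x * (f x)\<^sup>2) - 2 * c * m + c\<^sup>2"
    unfolding m_def using assms(2)
    by (simp add: power2_diff sum_subtractf sum.distrib sum_distrib_left sum_distrib_right[symmetric] algebra_simps)
  moreover have "(m - c)\<^sup>2 = m\<^sup>2 - 2 * c * m + c\<^sup>2"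
    by (simp add: power2_diff algebra_simps)
  moreover have "0 \<le> (m - c)\<^sup>2"
    by simp
  ultimately show ?thesis
    by linarith
qed

lemma poincare_on_spectral_gap:
  assumes "\<And>x. x \<in> \<Omega> \<Longrightarrow> 0 \<le> \<mu> x" "stochastic_on \<Omega> Q"
  shows "poincare_on \<Omega> \<mu> Q (spectral_gap \<Omega> \<mu> Q)"
  unfolding poincare_on_def
proof
  fix f
  show "spectral_gap \<Omega> \<mu> Q * var \<Omega> \<mu> f \<le> dirichlet \<Omega> \<mu> Q f"
  proof (cases "var \<Omega> \<mu> f = 0")
    case True
    then show ?thesis
      using dirichlet_nonneg[of \<Omega> \<mu> Q f] assms by simp
  next
    case False
    then have "0 < var \<Omega> \<mu> f"
      using var_nonneg[of \<Omega> \<mu> f] assms(1) by (simp add: order_less_le)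
    have "0 \<le> dirichlet \<Omega> \<mu> Q g / var \<Omega> \<mu> g" for g
      by (intro divide_nonneg_nonneg dirichlet_nonneg var_nonneg assms)
    then have "bdd_below {dirichlet \<Omega> \<mu> Q f / var \<Omega> \<mu> f | f. var \<Omega> \<mu> f \<noteq> 0}"
      by (intro bdd_belowI[where m = 0]) auto
    with False have "spectral_gap \<Omega> \<mu> Q \<le> dirichlet \<Omega> \<mu> Q f / var \<Omega> \<mu> f"
      unfolding spectral_gap_def by (blast intro: cInf_lower)
    with \<open>0 < var \<Omega> \<mu> f\<close> show ?thesis
      by (simp add: le_divide_eq)
  qed
qed

lemma poincare_on_le_spectral_gap:
  assumes "\<And>x. x \<in> \<Omega> \<Longrightarrow> 0 \<le> \<mu> x" "var \<Omega> \<mu> f \<noteq> 0" "poincare_on \<Omega> \<mu> Q c"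
  shows "c \<le> spectral_gap \<Omega> \<mu> Q"
  unfolding spectral_gap_def
proof (rule cInf_greatest)
  show "{dirichlet \<Omega> \<mu> Q f / var \<Omega> \<mu> f | f. var \<Omega> \<mu> f \<noteq> 0} \<noteq> {}"
    using assms(2) by blast
next
  fix r assume "r \<in> {dirichlet \<Omega> \<mu> Q f / var \<Omega> \<mu> f | f. var \<Omega> \<mu> f \<noteq> 0}"
  then obtain g where r: "r = dirichlet \<Omega> \<mu> Q g / var \<Omega> \<mu> g" and "var \<Omega> \<mu> g \<noteq> 0"
    by blast
  then have "0 < var \<Omega> \<mu> g"
    using var_nonneg[of \<Omega> \<mu> g] assms(1) by (simp add: order_less_le)
  then show "c \<le> r"
    using assms(3) unfolding r poincare_on_def by (simp add: le_divide_eq)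
qed

lemma dirichlet_edge_le:
  assumes "finite \<Omega>" "\<And>x. x \<in> \<Omega> \<Longrightarrow> 0 \<le> \<mu> x" "stochastic_on \<Omega> Q" "x \<in> \<Omega>" "y \<in> \<Omega>"
  shows "\<mu> x * Q x y * (f x - f y)\<^sup>2 \<le> 2 * dirichlet \<Omega> \<mu> Q f"
proof -
  have nonneg: "0 \<le> \<mu> x' * Q x' y' * (f x' - f y')\<^sup>2" if "x' \<in> \<Omega>" "y' \<in> \<Omega>" for x' y'
    using assms(2,3) that unfolding stochastic_on_def by simp
  have "\<mu> x * Q x y * (f x - f y)\<^sup>2 \<le> (\<Sum>y'\<in>\<Omega>. \<mu> x * Q x y' * (f x - f y')\<^sup>2)"
    using assms(1,4,5) nonneg by (intro member_le_sum) auto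
  also have "\<dots> \<le> (\<Sum>x'\<in>\<Omega>. \<Sum>y'\<in>\<Omega>. \<mu> x' * Q x' y' * (f x' - f y')\<^sup>2)"
    using assms(1,4) nonneg
    by (intro member_le_sum[where f = "\<lambda>x'. \<Sum>y'\<in>\<Omega>. \<mu> x' * Q x' y' * (f x' - f y')\<^sup>2"] sum_nonneg) auto
  finally show ?thesis
    unfolding dirichlet_def by simp
qed

lemma mpow_pos_imp_abs_diff_le:
  assumes "stochastic_on \<Omega> Q" "\<And>x y. x \<in> \<Omega> \<Longrightarrow> y \<in> \<Omega> \<Longrightarrow> 0 < Q x y \<Longrightarrow> \<bar>f x - f y\<bar> \<le> s"
  shows "x \<in> \<Omega> \<Longrightarrow> y \<in> \<Omega> \<Longrightarrow> 0 < mpow \<Omega> Q n x y \<Longrightarrow> \<bar>f x - f y\<bar> \<le> real n * s"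
proof (induction n arbitrary: y)
  case 0
  then show ?case
    by (simp split: if_splits)
next
  case (Suc n)
  have "0 < (\<Sum>z\<in>\<Omega>. mpow \<Omega> Q n x z * Q z y)"
    using Suc.prems(3) by simp
  then obtain z where z: "z \<in> \<Omega>" and pos: "0 < mpow \<Omega> Q n x z * Q z y"
    by (metis (no_types, lifting) not_less sum_nonpos)
  have "0 \<le> Q z y"
    using assms(1) z Suc.prems(2) unfolding stochastic_on_def by simp
  with pos have "0 < Q z y" "0 < mpow \<Omega> Q n x z"
    by (auto simp: zero_less_mult_iff)
  have "\<bar>f x - f y\<bar> \<le> \<bar>f x - f z\<bar> + \<bar>f z - f y\<bar>"
    by linarith
  also have "\<dots> \<le> real n * s + s"
    using Suc.IH[OF Suc.prems(1) z \<open>0 < mpow \<Omega> Q n x z\<close>] assms(2)[OF z Suc.prems(2) \<open>0 < Q z y\<close>]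
    by linarith
  finally show ?case
    by (simp add: algebra_simps)
qed

lemma var_le_by_paths:
  assumes "finite \<Omega>" "prob_mass_pos \<Omega> \<pi>" "stochastic_on \<Omega> P" "0 < \<delta>"
    and "\<And>x y. x \<in> \<Omega> \<Longrightarrow> y \<in> \<Omega> \<Longrightarrow> 0 < P x y \<Longrightarrow> \<delta> \<le> \<pi> x * P x y"
    and "\<And>x y. x \<in> \<Omega> \<Longrightarrow> y \<in> \<Omega> \<Longrightarrow> \<exists>k\<le>N. 0 < mpow \<Omega> P k x y"
  shows "\<delta> * var \<Omega> \<pi> f \<le> 2 * (real N)\<^sup>2 * dirichlet \<Omega> \<pi> P f"
proof -
  have \<pi>_nonneg: "\<And>x. x \<in> \<Omega> \<Longrightarrow> 0 \<le> \<pi> x" and \<pi>_sum: "sum \<pi> \<Omega> = 1"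
    using assms(2) unfolding prob_mass_pos_def by (auto simp: less_imp_le)
  then obtain x0 where x0: "x0 \<in> \<Omega>"
    by fastforce
  define D where "D = dirichlet \<Omega> \<pi> P f"
  have "0 \<le> D"
    unfolding D_def by (intro dirichlet_nonneg \<pi>_nonneg assms(3))
  define s where "s = sqrt (2 * D / \<delta>)"
  have "0 \<le> s"
    unfolding s_def using \<open>0 \<le> D\<close> assms(4) by simp
  have edge: "\<bar>f x - f y\<bar> \<le> s" if "x \<in> \<Omega>" "y \<in> \<Omega>" "0 < P x y" for x y
  proof -
    have "\<delta> * (f x - f y)\<^sup>2 \<le> \<pi> x * P x y * (f x - f y)\<^sup>2"
      using assms(5)[OF that] by (simp add: mult_right_mono)
    also have "\<dots> \<le> 2 * D"
      unfolding D_def by (intro dirichlet_edge_le \<pi>_nonneg assms(1,3) that(1,2))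
    finally have "(f x - f y)\<^sup>2 \<le> 2 * D / \<delta>"
      using assms(4) by (simp add: field_simps)
    then have "sqrt ((f x - f y)\<^sup>2) \<le> s"
      unfolding s_def by (rule real_sqrt_le_mono)
    then show ?thesis
      by simp
  qed
  have "(f x - f x0)\<^sup>2 \<le> (real N)\<^sup>2 * (2 * D / \<delta>)" if x: "x \<in> \<Omega>" for x
  proof -
    obtain k where "k \<le> N" "0 < mpow \<Omega> P k x x0"
      using assms(6)[OF x x0] by blast
    then have "\<bar>f x - f x0\<bar> \<le> real k * s"
      using mpow_pos_imp_abs_diff_le[where f = f and s = s, OF assms(3) edge x x0] by blast
    also have "\<dots> \<le> real N * s"
      using \<open>k \<le> N\<close> \<open>0 \<le> s\<close> by (simp add: mult_right_mono)
    finally have "\<bar>f x - f x0\<bar>\<^sup>2 \<le> (real N * s)\<^sup>2"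
      by (rule power_mono) simp
    then show ?thesis
      unfolding s_def using \<open>0 \<le> D\<close> assms(4) by (simp add: power_mult_distrib)
  qed
  then have "(\<Sum>x\<in>\<Omega>. \<pi> x * (f x - f x0)\<^sup>2) \<le> (\<Sum>x\<in>\<Omega>. \<pi> x * ((real N)\<^sup>2 * (2 * D / \<delta>)))"
    by (intro sum_mono mult_left_mono \<pi>_nonneg)
  also have "\<dots> = (real N)\<^sup>2 * (2 * D / \<delta>)"
    unfolding sum_distrib_right[symmetric] \<pi>_sum by simp
  finally have "var \<Omega> \<pi> f \<le> (real N)\<^sup>2 * (2 * D / \<delta>)"
    using var_le_second_moment[OF assms(1) \<pi>_sum, of f "f x0"] by linarith
  then show ?thesis
    unfolding D_def using assms(4) by (simp add: field_simps)
qed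

lemma irreducible_imp_poincare_on:
  assumes "finite \<Omega>" "prob_mass_pos \<Omega> \<pi>" "stochastic_on \<Omega> P" "irreducible_on \<Omega> P"
  shows "\<exists>\<kappa>>0. poincare_on \<Omega> \<pi> P \<kappa>"
proof -
  \<comment> \<open>\<open>\<delta>\<close> is the smallest positive edge weight; \<open>N\<close> bounds the length of a shortest path.\<close>
  define E where "E = {\<pi> x * P x y | x y. x \<in> \<Omega> \<and> y \<in> \<Omega> \<and> 0 < P x y}"
  define \<delta> where "\<delta> = Min (insert 1 E)"
  have "E \<subseteq> (\<lambda>(x, y). \<pi> x * P x y) ` (\<Omega> \<times> \<Omega>)"
    unfolding E_def by auto
  then have "finite E"
    using assms(1) by (simp add: finite_subset)
  then have "0 < \<delta>" and \<delta>_le: "\<And>x y. x \<in> \<Omega> \<Longrightarrow> y \<in> \<Omega> \<Longrightarrow> 0 < P x y \<Longrightarrow> \<delta> \<le> \<pi> x * P x y"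
    using assms(2) unfolding \<delta>_def E_def prob_mass_pos_def by (auto intro!: Min_le)
  define n where "n x y = (LEAST k. 0 < mpow \<Omega> P k x y)" for x y
  define N where "N = 1 + (\<Sum>x\<in>\<Omega>. \<Sum>y\<in>\<Omega>. n x y)"
  have paths: "\<exists>k\<le>N. 0 < mpow \<Omega> P k x y" if "x \<in> \<Omega>" "y \<in> \<Omega>" for x y
  proof (intro exI conjI)
    show "0 < mpow \<Omega> P (n x y) x y"
      using assms(4) that unfolding irreducible_on_def n_def by (meson LeastI_ex)
    have "n x y \<le> (\<Sum>y'\<in>\<Omega>. n x y')"
      using assms(1) that by (intro member_le_sum) auto
    also have "\<dots> \<le> (\<Sum>x\<in>\<Omega>. \<Sum>y\<in>\<Omega>. n x y)"
      using assms(1) that by (intro member_le_sum[where f = "\<lambda>x. \<Sum>y\<in>\<Omega>. n x y"]) auto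
    finally show "n x y \<le> N"
      unfolding N_def by simp
  qed
  have "1 \<le> N"
    unfolding N_def by simp
  then have "0 < (real N)\<^sup>2"
    by simp
  have "\<delta> / (2 * (real N)\<^sup>2) * var \<Omega> \<pi> f \<le> dirichlet \<Omega> \<pi> P f" for f
    using var_le_by_paths[OF assms(1-3) \<open>0 < \<delta>\<close> \<delta>_le paths, of f] \<open>0 < (real N)\<^sup>2\<close>
    by (simp add: field_simps)
  moreover have "0 < \<delta> / (2 * (real N)\<^sup>2)"
    using \<open>0 < \<delta>\<close> \<open>0 < (real N)\<^sup>2\<close> by simp
  ultimately show ?thesis
    unfolding poincare_on_def by blast
qed

lemma spectral_gap_pos:
  assumes "finite \<Omega>" "prob_mass_pos \<Omega> \<pi>" "stochastic_on \<Omega> P" "irreducible_on \<Omega> P" "var \<Omega> \<pi> f \<noteq> 0"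
  shows "0 < spectral_gap \<Omega> \<pi> P"
proof -
  obtain \<kappa> where "0 < \<kappa>" "poincare_on \<Omega> \<pi> P \<kappa>"
    using irreducible_imp_poincare_on[OF assms(1-4)] by blast
  moreover have "\<And>x. x \<in> \<Omega> \<Longrightarrow> 0 \<le> \<pi> x"
    using assms(2) unfolding prob_mass_pos_def by (simp add: less_imp_le)
  ultimately show ?thesis
    using poincare_on_le_spectral_gap[of \<Omega> \<pi> f P \<kappa>] assms(5) by force
qed

section \<open>Projected chains on a product space\<close>

lemma dirichlet_reindex:
  assumes "bij_betw h Z \<Omega>" "\<And>z. z \<in> Z \<Longrightarrow> \<mu> (h z) = \<mu>' z"
    and "\<And>z z'. z \<in> Z \<Longrightarrow> z' \<in> Z \<Longrightarrow> Q (h z) (h z') = Q' z z'"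
  shows "dirichlet \<Omega> \<mu> Q f = dirichlet Z \<mu>' Q' (f \<circ> h)"
proof -
  have "(\<Sum>x\<in>\<Omega>. \<Sum>y\<in>\<Omega>. \<mu> x * Q x y * (f x - f y)\<^sup>2)
      = (\<Sum>z\<in>Z. \<Sum>z'\<in>Z. \<mu> (h z) * Q (h z) (h z') * (f (h z) - f (h z'))\<^sup>2)"
    unfolding sum.reindex_bij_betw[OF assms(1), symmetric] ..
  also have "\<dots> = (\<Sum>z\<in>Z. \<Sum>z'\<in>Z. \<mu>' z * Q' z z' * ((f \<circ> h) z - (f \<circ> h) z')\<^sup>2)"
    using assms(2,3) by simp
  finally show ?thesis
    unfolding dirichlet_def by simp
qed

lemma var_reindex:
  assumes "bij_betw h Z \<Omega>" "\<And>z. z \<in> Z \<Longrightarrow> \<mu> (h z) = \<mu>' z"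
  shows "var \<Omega> \<mu> f = var Z \<mu>' (f \<circ> h)"
proof -
  have "expect \<Omega> \<mu> f = expect Z \<mu>' (f \<circ> h)"
    unfolding expect_def sum.reindex_bij_betw[OF assms(1), symmetric] using assms(2) by simp
  then show ?thesis
    unfolding var_def sum.reindex_bij_betw[OF assms(1), symmetric] using assms(2) by simp
qed

lemma prob_mass_pos_reindex:
  assumes "bij_betw h Z \<Omega>" "\<And>z. z \<in> Z \<Longrightarrow> \<mu> (h z) = \<mu>' z" "prob_mass_pos Z \<mu>'"
  shows "prob_mass_pos \<Omega> \<mu>"
  unfolding prob_mass_pos_def
proof
  show "\<forall>x\<in>\<Omega>. 0 < \<mu> x"
    using assms unfolding prob_mass_pos_def bij_betw_def by auto
  have "sum \<mu> \<Omega> = sum \<mu>' Z"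
    unfolding sum.reindex_bij_betw[OF assms(1), symmetric] using assms(2) by simp
  then show "sum \<mu> \<Omega> = 1"
    using assms(3) unfolding prob_mass_pos_def by simp
qed

lemma poincare_on_reindex:
  assumes "bij_betw h Z \<Omega>" "\<And>z. z \<in> Z \<Longrightarrow> \<mu> (h z) = \<mu>' z"
    and "\<And>z z'. z \<in> Z \<Longrightarrow> z' \<in> Z \<Longrightarrow> Q (h z) (h z') = Q' z z'"
    and "poincare_on Z \<mu>' Q' c"
  shows "poincare_on \<Omega> \<mu> Q c"
  unfolding poincare_on_def
proof
  fix f
  have "c * var \<Omega> \<mu> f = c * var Z \<mu>' (f \<circ> h)"
    by (simp add: var_reindex[of h Z \<Omega> \<mu> \<mu>', OF assms(1,2)])
  also have "\<dots> \<le> dirichlet Z \<mu>' Q' (f \<circ> h)"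
    using assms(4) unfolding poincare_on_def by blast
  also have "\<dots> = dirichlet \<Omega> \<mu> Q f"
    by (simp add: dirichlet_reindex[of h Z \<Omega> \<mu> \<mu>' Q Q', OF assms(1-3)])
  finally show "c * var \<Omega> \<mu> f \<le> dirichlet \<Omega> \<mu> Q f" .
qed

lemma bij_betw_merge:
  assumes "I \<inter> J = {}"
  shows "bij_betw (merge I J) (Pi\<^sub>E I X \<times> Pi\<^sub>E J X) (Pi\<^sub>E (I \<union> J) X)"
proof (rule bij_betw_byWitness[where f' = "\<lambda>x. (restrict x I, restrict x J)"])
  show "\<forall>p\<in>Pi\<^sub>E I X \<times> Pi\<^sub>E J X. (restrict (merge I J p) I, restrict (merge I J p) J) = p"
    using assms by auto
  show "\<forall>x\<in>Pi\<^sub>E (I \<union> J) X. merge I J (restrict x I, restrict x J) = x"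
    by simp
  show "merge I J ` (Pi\<^sub>E I X \<times> Pi\<^sub>E J X) \<subseteq> Pi\<^sub>E (I \<union> J) X"
    using assms by (auto simp: PiE_iff)
  show "(\<lambda>x. (restrict x I, restrict x J)) ` Pi\<^sub>E (I \<union> J) X \<subseteq> Pi\<^sub>E I X \<times> Pi\<^sub>E J X"
    by auto
qed

locale product_chain =
  fixes d :: nat and X :: "nat \<Rightarrow> 'a set" and \<pi> :: "(nat \<Rightarrow> 'a) \<Rightarrow> real"
    and P :: "(nat \<Rightarrow> 'a) \<Rightarrow> (nat \<Rightarrow> 'a) \<Rightarrow> real"
  assumes finite_X: "\<And>j. j \<in> {1..d} \<Longrightarrow> finite (X j)"
    and prob_mass_pos_\<pi>: "prob_mass_pos (prod_space d X) \<pi>"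
    and stochastic_P: "stochastic_on (prod_space d X) P"
    and reversible_P: "reversible_on (prod_space d X) \<pi> P"
begin

abbreviation \<Omega> :: "(nat \<Rightarrow> 'a) set" where
  "\<Omega> \<equiv> prod_space d X"

abbreviation fiber :: "nat set \<Rightarrow> (nat \<Rightarrow> 'a) \<Rightarrow> (nat \<Rightarrow> 'a) set" where
  "fiber R u \<equiv> {x \<in> \<Omega>. restrict x R = u}"

definition flow :: "nat set \<Rightarrow> (nat \<Rightarrow> 'a) \<Rightarrow> (nat \<Rightarrow> 'a) \<Rightarrow> real" where
  "flow R u u' = (\<Sum>x\<in>fiber R u. \<Sum>y\<in>fiber R u'. \<pi> x * P x y)"

lemma finite_PiE_X: "R \<subseteq> {1..d} \<Longrightarrow> finite (Pi\<^sub>E R X)"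
  using finite_X by (intro finite_PiE) (auto intro: finite_subset)

lemma finite_\<Omega>: "finite \<Omega>"
  unfolding prod_space_def by (rule finite_PiE_X) simp

lemma \<pi>_pos: "x \<in> \<Omega> \<Longrightarrow> 0 < \<pi> x"
  using prob_mass_pos_\<pi> unfolding prob_mass_pos_def by auto

lemma \<pi>_nonneg: "x \<in> \<Omega> \<Longrightarrow> 0 \<le> \<pi> x"
  using \<pi>_pos by (simp add: less_imp_le)

lemma P_nonneg: "x \<in> \<Omega> \<Longrightarrow> y \<in> \<Omega> \<Longrightarrow> 0 \<le> P x y"
  using stochastic_P unfolding stochastic_on_def by auto

lemma restrict_in_PiE: "x \<in> \<Omega> \<Longrightarrow> R \<subseteq> {1..d} \<Longrightarrow> restrict x R \<in> Pi\<^sub>E R X"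
  unfolding prod_space_def by (auto simp: PiE_iff)

lemma fiber_nonempty:
  assumes "u \<in> Pi\<^sub>E R X" "R \<subseteq> {1..d}"
  shows "fiber R u \<noteq> {}"
proof -
  have "\<Omega> \<noteq> {}"
    using prob_mass_pos_\<pi> unfolding prob_mass_pos_def by auto
  then obtain x0 where x0: "x0 \<in> \<Omega>"
    by blast
  define x where "x i = (if i \<in> R then u i else x0 i)" for i
  have "x \<in> \<Omega>"
    using assms x0 unfolding x_def prod_space_def by (auto simp: PiE_iff extensional_def)
  moreover have "restrict x R = u"
    using assms(1) unfolding x_def by (auto simp: PiE_iff extensional_def)
  ultimately show ?thesis
    by blast
qed

lemma marg_pos: "u \<in> Pi\<^sub>E R X \<Longrightarrow> R \<subseteq> {1..d} \<Longrightarrow> 0 < marg \<Omega> \<pi> R u"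
  unfolding marg_def using finite_\<Omega> fiber_nonempty \<pi>_pos by (intro sum_pos) auto

lemma sum_over_fibers:
  assumes "R \<subseteq> {1..d}"
  shows "(\<Sum>x\<in>\<Omega>. G x) = (\<Sum>u\<in>Pi\<^sub>E R X. \<Sum>x\<in>fiber R u. G x)"
  using sum.group[OF finite_\<Omega> finite_PiE_X[OF assms], of "\<lambda>x. restrict x R" G] restrict_in_PiE assms
  by (simp add: image_subset_iff)

lemma proj_chain_eq_flow: "proj_chain \<Omega> \<pi> P R u u' = flow R u u' / marg \<Omega> \<pi> R u"
  unfolding proj_chain_def flow_def ..

lemma marg_mult_proj_chain:
  assumes "u \<in> Pi\<^sub>E R X" "R \<subseteq> {1..d}"
  shows "marg \<Omega> \<pi> R u * proj_chain \<Omega> \<pi> P R u u' = flow R u u'"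
  unfolding proj_chain_eq_flow using marg_pos[OF assms] by simp

lemma flow_nonneg: "0 \<le> flow R u u'"
  unfolding flow_def using \<pi>_nonneg P_nonneg by (intro sum_nonneg mult_nonneg_nonneg) auto

lemma flow_commute: "flow R u u' = flow R u' u"
proof -
  have "flow R u u' = (\<Sum>x\<in>fiber R u. \<Sum>y\<in>fiber R u'. \<pi> y * P y x)"
    unfolding flow_def using reversible_P unfolding reversible_on_def by (intro sum.cong refl) auto
  also have "\<dots> = flow R u' u"
    unfolding flow_def by (rule sum.swap)
  finally show ?thesis .
qed

lemma prob_mass_pos_marg: "R \<subseteq> {1..d} \<Longrightarrow> prob_mass_pos (Pi\<^sub>E R X) (marg \<Omega> \<pi> R)"
  using marg_pos sum_over_fibers[of R \<pi>] prob_mass_pos_\<pi>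
  unfolding prob_mass_pos_def marg_def by simp

lemma stochastic_on_proj_chain:
  assumes "R \<subseteq> {1..d}"
  shows "stochastic_on (Pi\<^sub>E R X) (proj_chain \<Omega> \<pi> P R)"
  unfolding stochastic_on_def
proof (intro conjI ballI)
  fix u u' assume u: "u \<in> Pi\<^sub>E R X"
  show "0 \<le> proj_chain \<Omega> \<pi> P R u u'"
    unfolding proj_chain_eq_flow using flow_nonneg marg_pos[OF u assms] by simp
next
  fix u assume u: "u \<in> Pi\<^sub>E R X"
  have "(\<Sum>u'\<in>Pi\<^sub>E R X. flow R u u') = (\<Sum>x\<in>fiber R u. \<Sum>u'\<in>Pi\<^sub>E R X. \<Sum>y\<in>fiber R u'. \<pi> x * P x y)"
    unfolding flow_def by (rule sum.swap)
  also have "\<dots> = (\<Sum>x\<in>fiber R u. \<pi> x * (\<Sum>y\<in>\<Omega>. P x y))"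
    unfolding sum_over_fibers[OF assms, symmetric] sum_distrib_left ..
  also have "\<dots> = marg \<Omega> \<pi> R u"
    using stochastic_P unfolding marg_def stochastic_on_def by simp
  finally show "(\<Sum>u'\<in>Pi\<^sub>E R X. proj_chain \<Omega> \<pi> P R u u') = 1"
    unfolding proj_chain_eq_flow sum_divide_distrib[symmetric] using marg_pos[OF u assms] by simp
qed

lemma reversible_on_proj_chain:
  "R \<subseteq> {1..d} \<Longrightarrow> reversible_on (Pi\<^sub>E R X) (marg \<Omega> \<pi> R) (proj_chain \<Omega> \<pi> P R)"
  unfolding reversible_on_def using marg_mult_proj_chain flow_commute by simp

lemma lazy_on_proj_chain:
  assumes "lazy_on \<Omega> P" "R \<subseteq> {1..d}"
  shows "lazy_on (Pi\<^sub>E R X) (proj_chain \<Omega> \<pi> P R)"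
  unfolding lazy_on_def
proof
  fix u assume u: "u \<in> Pi\<^sub>E R X"
  have "marg \<Omega> \<pi> R u / 2 = (\<Sum>x\<in>fiber R u. \<pi> x * (1/2))"
    unfolding marg_def by (simp add: sum_divide_distrib)
  also have "\<dots> \<le> (\<Sum>x\<in>fiber R u. \<pi> x * P x x)"
    using assms(1) \<pi>_nonneg unfolding lazy_on_def by (intro sum_mono mult_left_mono) auto
  also have "\<dots> \<le> flow R u u"
    unfolding flow_def using finite_\<Omega> \<pi>_nonneg P_nonneg
    by (intro sum_mono member_le_sum[where f = "\<lambda>y. \<pi> _ * P _ y"]) auto
  finally show "1/2 \<le> proj_chain \<Omega> \<pi> P R u u"
    unfolding proj_chain_eq_flow using marg_pos[OF u assms(2)] by (simp add: le_divide_eq)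
qed

lemma dirichlet_restrict:
  assumes "R \<subseteq> {1..d}"
  shows "dirichlet \<Omega> \<pi> P (\<lambda>x. h (restrict x R)) = dirichlet (Pi\<^sub>E R X) (marg \<Omega> \<pi> R) (proj_chain \<Omega> \<pi> P R) h"
proof -
  have "(\<Sum>x\<in>\<Omega>. \<Sum>y\<in>\<Omega>. \<pi> x * P x y * (h (restrict x R) - h (restrict y R))\<^sup>2)
      = (\<Sum>u\<in>Pi\<^sub>E R X. \<Sum>x\<in>fiber R u. \<Sum>u'\<in>Pi\<^sub>E R X. \<Sum>y\<in>fiber R u'. \<pi> x * P x y * (h u - h u')\<^sup>2)"
    unfolding sum_over_fibers[OF assms, of "\<lambda>x. \<Sum>y\<in>\<Omega>. _ x y"] sum_over_fibers[OF assms, of "\<lambda>y. _ y"]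
    by (intro sum.cong refl) auto
  also have "\<dots> = (\<Sum>u\<in>Pi\<^sub>E R X. \<Sum>u'\<in>Pi\<^sub>E R X. flow R u u' * (h u - h u')\<^sup>2)"
    unfolding flow_def sum_distrib_right by (intro sum.cong refl sum.swap)
  also have "\<dots> = (\<Sum>u\<in>Pi\<^sub>E R X. \<Sum>u'\<in>Pi\<^sub>E R X. marg \<Omega> \<pi> R u * proj_chain \<Omega> \<pi> P R u u' * (h u - h u')\<^sup>2)"
    using assms by (intro sum.cong refl) (simp add: marg_mult_proj_chain)
  finally show ?thesis
    unfolding dirichlet_def by simp
qed

lemma var_restrict:
  assumes "R \<subseteq> {1..d}"
  shows "var \<Omega> \<pi> (\<lambda>x. h (restrict x R)) = var (Pi\<^sub>E R X) (marg \<Omega> \<pi> R) h"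
proof -
  have lift: "(\<Sum>x\<in>\<Omega>. \<pi> x * g (restrict x R)) = (\<Sum>u\<in>Pi\<^sub>E R X. marg \<Omega> \<pi> R u * g u)" for g
    unfolding sum_over_fibers[OF assms] marg_def sum_distrib_right by (intro sum.cong refl) auto
  show ?thesis
    unfolding var_def expect_def lift by (rule lift)
qed

lemma poincare_on_proj_chain:
  assumes "poincare_on \<Omega> \<pi> P c" "R \<subseteq> {1..d}"
  shows "poincare_on (Pi\<^sub>E R X) (marg \<Omega> \<pi> R) (proj_chain \<Omega> \<pi> P R) c"
  using assms(1) unfolding poincare_on_def dirichlet_restrict[OF assms(2), symmetric]
    var_restrict[OF assms(2), symmetric]
  by blast

lemma bij_betw_merge_complement:
  assumes "S \<subseteq> {1..d}"
  shows "bij_betw (merge S ({1..d} - S)) (Pi\<^sub>E S X \<times> Pi\<^sub>E ({1..d} - S) X) \<Omega>"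
  using bij_betw_merge[of S "{1..d} - S" X] assms unfolding prod_space_def
  by (simp add: Un_absorb1)

lemma tensor_marg_merge:
  assumes "S \<subseteq> {1..d}" "p \<in> Pi\<^sub>E S X \<times> Pi\<^sub>E ({1..d} - S) X"
  shows "tensor_marg d X \<pi> S (merge S ({1..d} - S) p) = marg \<Omega> \<pi> S (fst p) * marg \<Omega> \<pi> ({1..d} - S) (snd p)"
  using assms(2) unfolding tensor_marg_def by (auto simp: restrict_merge)

lemma tensor_chain_merge:
  assumes "S \<subseteq> {1..d}" "p \<in> Pi\<^sub>E S X \<times> Pi\<^sub>E ({1..d} - S) X" "q \<in> Pi\<^sub>E S X \<times> Pi\<^sub>E ({1..d} - S) X"
  shows "tensor_chain d X \<pi> P S (merge S ({1..d} - S) p) (merge S ({1..d} - S) q)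
       = kernel_tensor (proj_chain \<Omega> \<pi> P S) (proj_chain \<Omega> \<pi> P ({1..d} - S)) p q"
  using assms(2,3) unfolding tensor_chain_def kernel_tensor_def by (auto simp: restrict_merge)

lemma prob_mass_pos_tensor_marg:
  assumes "S \<subseteq> {1..d}"
  shows "prob_mass_pos \<Omega> (tensor_marg d X \<pi> S)"
proof (rule prob_mass_pos_reindex[OF bij_betw_merge_complement[OF assms]])
  show "prob_mass_pos (Pi\<^sub>E S X \<times> Pi\<^sub>E ({1..d} - S) X)
      (\<lambda>p. marg \<Omega> \<pi> S (fst p) * marg \<Omega> \<pi> ({1..d} - S) (snd p))"
    using assms by (intro prob_mass_pos_product prob_mass_pos_marg) auto
qed (rule tensor_marg_merge[OF assms])

lemma poincare_on_tensor_chain: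
  assumes "S \<subseteq> {1..d}" "lazy_on \<Omega> P" "0 \<le> c" "poincare_on \<Omega> \<pi> P c"
  shows "poincare_on \<Omega> (tensor_marg d X \<pi> S) (tensor_chain d X \<pi> P S) c"
proof (rule poincare_on_reindex[OF bij_betw_merge_complement[OF assms(1)]])
  have "{1..d} - S \<subseteq> {1..d}"
    by blast
  with assms(1) show "poincare_on (Pi\<^sub>E S X \<times> Pi\<^sub>E ({1..d} - S) X)
      (\<lambda>p. marg \<Omega> \<pi> S (fst p) * marg \<Omega> \<pi> ({1..d} - S) (snd p))
      (kernel_tensor (proj_chain \<Omega> \<pi> P S) (proj_chain \<Omega> \<pi> P ({1..d} - S))) c"
    by (intro poincare_on_kernel_tensor finite_PiE_X prob_mass_pos_marg stochastic_on_proj_chain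
        reversible_on_proj_chain lazy_on_proj_chain poincare_on_proj_chain assms(2-4))
qed (rule tensor_marg_merge[OF assms(1)] tensor_chain_merge[OF assms(1)], assumption+)+

end

theorem corollary2p31:
  fixes d :: nat and X :: "nat \<Rightarrow> 'a set" and \<pi> :: "(nat \<Rightarrow> 'a) \<Rightarrow> real"
    and P :: "(nat \<Rightarrow> 'a) \<Rightarrow> (nat \<Rightarrow> 'a) \<Rightarrow> real" and S :: "nat set"
  assumes "\<And>j. j \<in> {1..d} \<Longrightarrow> finite (X j)"
    and "prob_mass_pos (prod_space d X) \<pi>"
    and "S \<noteq> {}" and "S \<subseteq> {1..d}"
    and "stochastic_on (prod_space d X) P"
    and "lazy_on (prod_space d X) P"
    and "ergodic_on (prod_space d X) P"
    and "reversible_on (prod_space d X) \<pi> P"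
  shows "spectral_gap (prod_space d X) \<pi> P
           \<le> spectral_gap (prod_space d X) (tensor_marg d X \<pi> S) (tensor_chain d X \<pi> P S)
       \<and> t_rel (prod_space d X) \<pi> P
           \<ge> t_rel (prod_space d X) (tensor_marg d X \<pi> S) (tensor_chain d X \<pi> P S)"
proof -
  interpret product_chain d X \<pi> P
    using assms(1,2,5,8) by unfold_locales
  have tensor_pos: "prob_mass_pos \<Omega> (tensor_marg d X \<pi> S)"
    by (rule prob_mass_pos_tensor_marg[OF assms(4)])
  have var_eq_0: "var \<Omega> (tensor_marg d X \<pi> S) f = 0 \<longleftrightarrow> var \<Omega> \<pi> f = 0" for f
    using var_eq_0_iff[OF finite_\<Omega> tensor_pos] var_eq_0_iff[OF finite_\<Omega> prob_mass_pos_\<pi>] by simp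
  show ?thesis
  proof (cases "\<exists>f. var \<Omega> \<pi> f \<noteq> 0")
    case True
    then obtain f where f: "var \<Omega> \<pi> f \<noteq> 0"
      by blast
    have gap_pos: "0 < spectral_gap \<Omega> \<pi> P"
      using spectral_gap_pos[OF finite_\<Omega> prob_mass_pos_\<pi> stochastic_P _ f] assms(7)
      unfolding ergodic_on_def by blast
    have "poincare_on \<Omega> (tensor_marg d X \<pi> S) (tensor_chain d X \<pi> P S) (spectral_gap \<Omega> \<pi> P)"
      using gap_pos \<pi>_nonneg stochastic_P
      by (intro poincare_on_tensor_chain poincare_on_spectral_gap assms(4,6)) auto
    then have "spectral_gap \<Omega> \<pi> P \<le> spectral_gap \<Omega> (tensor_marg d X \<pi> S) (tensor_chain d X \<pi> P S)"
      using poincare_on_le_spectral_gap[of \<Omega> "tensor_marg d X \<pi> S" f] tensor_pos f var_eq_0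
      unfolding prob_mass_pos_def by (auto simp: less_imp_le)
    with gap_pos show ?thesis
      unfolding t_rel_def by (simp add: divide_left_mono)
  next
    case False
    \<comment> \<open>Only constant functions on \<open>\<Omega>\<close>: both gaps are the same junk value \<open>Inf {}\<close>.\<close>
    then show ?thesis
      unfolding t_rel_def spectral_gap_def using var_eq_0 by simp
  qed
qed

end
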